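(* For $i\in\{1,2\}$ let $\Sigma_{i,\mathbb{T}}$ be the linear time-varying system $x_i(t+1)=A_i(t)x_i(t)+B_i(t)u_i(t)$, $y_i(t)=C_i(t)x_i(t)+D_i(t)u_i(t)$, $t\in\mathbb{T}=\{0,\dots,T-1\}$, with $u_i(t)\in\mathbb{R}^{n_u}$, $y_i(t)\in\mathbb{R}^{n_y}$ and initial state $x_i(0)=x_{i0}$, and let $\mathcal{B}_{i,x_{i0}}$ be its admissible behavior. For each $i$, let test inputs $\mathbf{u}_i^0,\dots,\mathbf{u}_i^{n_uT}\in\mathbb{R}^{n_uT}$ be applied from $x_{i0}$ with outputs $\mathbf{y}_i^k$, where $\mathbf{u}_i^0=0$ and $\operatorname{rank}[\mathbf{u}_i^1,\dots,\mathbf{u}_i^{n_uT}]=n_uT$; let $w_i^k=\operatorname{col}(\mathbf{u}_i^k,\mathbf{y}_i^k)$, $W_i=[w_i^1-w_i^0,\dots,w_i^{n_uT}-w_i^0]$, and let $H_i\in\mathbb{R}^{n_wT\times n_uT}$ be a matrix whose columns form an orthonormal basis of $\operatorname{span}(W_i)$. Then $\mathcal{B}_{1,x_{10}}$ and $\mathcal{B}_{2,x_{20}}$ are similar (i.e. $\mathcal{B}_{1,x_{10}}\cap\mathcal{B}_{2,x_{20}}\neq\emptyset$) if and only if there exist $l_1,l_2\in\mathbb{R}^{n_uT}$ such that $[H_1\ \ H_2]\begin{bmatrix}l_1\\ l_2\end{bmatrix}=w_2^0-w_1^0$. Moreover, the common behavior is $\mathcal{B}_{1,x_{10}}\cap\mathcal{B}_{2,x_{20}}=\{H_1l_1+w_1^0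 : (l_1,l_2)\text{ solves this equation}\}$.
   Context: $n_w=n_u+n_y$. Supervectors over $\mathbb{T}$: $\mathbf{u}_i=[u_i(0)^{\rm T},\dots,u_i(T-1)^{\rm T}]^{\rm T}$, likewise $\mathbf{y}_i,\mathbf{x}_i$. The admissible behavior $\mathcal{B}_{i,x_{i0}}\subseteq\mathbb{R}^{n_wT}$ is the set of all $\operatorname{col}(\mathbf{u}_i,\mathbf{y}_i)$ for which there exists a state supervector $\mathbf{x}_i$ with $x_i(0)=x_{i0}$ such that $(\mathbf{u}_i,\mathbf{y}_i,\mathbf{x}_i)$ satisfies the system equations. $\mathbf{y}_i^k$ denotes the output supervector of $\Sigma_{i,\mathbb{T}}$ under input $\mathbf{u}_i^k$ from $x_i(0)=x_{i0}$. Two admissible behaviors are called similar if their intersection is nonempty. *)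

theory Defs
  imports "Jordan_Normal_Form.DL_Rank"
begin

text \<open>Block t (of size n) of a supervector v = [v(0); ...; v(T-1)].\<close>
definition blk :: "nat \<Rightarrow> real vec \<Rightarrow> nat \<Rightarrow> real vec" where
  "blk n v t = vec n (\<lambda>j. v $ (t * n + j))"

definition behavior ::
  "nat \<Rightarrow> nat \<Rightarrow> nat \<Rightarrow> nat \<Rightarrow> (nat \<Rightarrow> real mat) \<Rightarrow> (nat \<Rightarrow> real mat) \<Rightarrow>
   (nat \<Rightarrow> real mat) \<Rightarrow> (nat \<Rightarrow> real mat) \<Rightarrow> real vec \<Rightarrow> real vec set" where
  "behavior nx nu ny T A B C D x0 =
     {u @\<^sub>v y | u y. u \<in> carrier_vec (nu * T) \<and> y \<in> carrier_vec (ny * T) \<and>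
        (\<exists>x :: nat \<Rightarrow> real vec. x 0 = x0 \<and>
           (\<forall>t<T. x t \<in> carrier_vec nx \<and>
                  x (Suc t) = A t *\<^sub>v x t + B t *\<^sub>v blk nu u t \<and>
                  blk ny y t = C t *\<^sub>v x t + D t *\<^sub>v blk nu u t))}"

definition well_dim_sys ::
  "nat \<Rightarrow> nat \<Rightarrow> nat \<Rightarrow> nat \<Rightarrow> (nat \<Rightarrow> real mat) \<Rightarrow> (nat \<Rightarrow> real mat) \<Rightarrow>
   (nat \<Rightarrow> real mat) \<Rightarrow> (nat \<Rightarrow> real mat) \<Rightarrow> real vec \<Rightarrow> bool" where
  "well_dim_sys nx nu ny T A B C D x0 \<longleftrightarrow> x0 \<in> carrier_vec nx \<and>
     (\<forall>t<T. A t \<in> carrier_mat nx nx \<and> B t \<in> carrier_mat nx nu \<and>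
            C t \<in> carrier_mat ny nx \<and> D t \<in> carrier_mat ny nu)"

definition diff_mat :: "nat \<Rightarrow> nat \<Rightarrow> (nat \<Rightarrow> real vec) \<Rightarrow> real mat" where
  "diff_mat m N w = mat_of_cols m (map (\<lambda>k. w k - w 0) [1..<N+1])"

definition onb_of_span :: "nat \<Rightarrow> real mat \<Rightarrow> real mat \<Rightarrow> bool" where
  "onb_of_span m H W \<longleftrightarrow>
     (\<forall>j<dim_col H. \<forall>k<dim_col H. col H j \<bullet> col H k = (if j = k then 1 else 0)) \<and>
     LinearCombinations.module.span class_ring (module_vec TYPE(real) m) (set (cols H)) = LinearCombinations.module.span class_ring (module_vec TYPE(real) m) (set (cols W))"

end

theory Submission
  imports Defs
begin

(* Since the dynamics are linear, the difference of two trajectories from x0 is a trajectory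
   from the zero state, and the zero-state behavior is a linear subspace on which the output is
   a function of the input.  The columns w^k - w^0 of W lie in this subspace and, by the rank
   condition, their input parts span all inputs; hence they span the subspace, and
   B(x0) = w^0 + range W = w^0 + range H.  Two such affine subspaces meet in the points
   H1 l1 + w1^0 with H1 l1 = H2 l2' + w2^0 - w1^0, i.e. with l2 = -l2'. *)

lemma block_index_less:
  assumes "t < T" "j < n"
  shows "t * n + j < n * (T :: nat)"
proof -
  have "t * n + j < Suc t * n" using assms(2) by simp
  also have "\<dots> \<le> T * n" using assms(1) by (intro mult_le_mono1) simp
  finally show ?thesis by (simp add: mult.commute)
qed

lemma blk_lincomb:
  assumes "u \<in> carrier_vec (n * T)" "v \<in> carrier_vec (n * T)" "t < T"
  shows "blk n (\<alpha> \<cdot>\<^sub>v u + \<beta> \<cdot>\<^sub>v v) t = \<alpha> \<cdot>\<^sub>v blk n u t + \<beta> \<cdot>\<^sub>v blk n v t"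
  using assms block_index_less[OF assms(3)] unfolding blk_def by (intro eq_vecI) auto

lemma eq_vec_if_blk_eq:
  assumes "y \<in> carrier_vec (n * T)" "y' \<in> carrier_vec (n * T)"
    and "\<And>t. t < T \<Longrightarrow> blk n y t = blk n y' t"
  shows "y = y'"
proof (rule eq_vecI)
  show "dim_vec y = dim_vec y'" using assms(1,2) by simp
  fix i assume "i < dim_vec y'"
  then have i: "i < n * T" using assms(2) by simp
  then have "n > 0" by (cases n) auto
  have "i div n < T" using i by (simp add: less_mult_imp_div_less mult.commute)
  then have "blk n y (i div n) $ (i mod n) = blk n y' (i div n) $ (i mod n)"
    using assms(3) by simp
  then show "y $ i = y' $ i" using \<open>n > 0\<close> unfolding blk_def by simp
qed

lemma vec_first_append:
  assumes "u \<in> carrier_vec n"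
  shows "vec_first (u @\<^sub>v y) n = u"
  using assms unfolding vec_first_def by (intro eq_vecI) auto

lemma mult_mat_vec_in_submodule:
  fixes W :: "'a :: field mat"
  assumes W: "W \<in> carrier_mat m n" and c: "c \<in> carrier_vec n"
    and S: "submodule class_ring S (module_vec TYPE('a) m)" and cols: "set (cols W) \<subseteq> S"
  shows "W *\<^sub>v c \<in> S"
proof -
  have "W *\<^sub>v c \<in> vec_space.col_space m W"
    using vec_space.col_space_eq[OF W] W c by auto
  then show ?thesis
    using module.span_is_subset[OF vec_module cols S] unfolding vec_space.col_space_def by blast
qed

lemma full_rank_mult_vec_surj:
  fixes M :: "'a :: field mat"
  assumes M: "M \<in> carrier_mat n n" and rank: "vec_space.rank n M = n"
    and v: "v \<in> carrier_vec n"
  shows "\<exists>c \<in> carrier_vec n. M *\<^sub>v c = v"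
proof -
  have "det M \<noteq> 0" using vec_space.det_rank_iff[OF M] rank by simp
  from det_non_zero_imp_unit[OF M this]
  obtain M' where M': "M' \<in> carrier_mat n n" "M * M' = 1\<^sub>m n"
    unfolding Units_def ring_mat_def by auto
  have "M *\<^sub>v (M' *\<^sub>v v) = v" using M M' v
    by (metis assoc_mult_mat_vec one_mult_mat_vec)
  then show ?thesis using M' v by (intro bexI[of _ "M' *\<^sub>v v"]) auto
qed

lemma mult_mat_vec_image_eq_if_span_cols_eq:
  fixes H W :: "'a :: field mat"
  assumes H: "H \<in> carrier_mat m n1" and W: "W \<in> carrier_mat m n2"
    and span: "LinearCombinations.module.span class_ring (module_vec TYPE('a) m) (set (cols H)) =
               LinearCombinations.module.span class_ring (module_vec TYPE('a) m) (set (cols W))"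
  shows "(*\<^sub>v) H ` carrier_vec n1 = (*\<^sub>v) W ` carrier_vec n2"
proof -
  have "(*\<^sub>v) H ` carrier_vec n1 = vec_space.col_space m H"
    using vec_space.col_space_eq[OF H] H by auto
  also have "\<dots> = vec_space.col_space m W"
    using span unfolding vec_space.col_space_def .
  also have "\<dots> = (*\<^sub>v) W ` carrier_vec n2"
    using vec_space.col_space_eq[OF W] W by auto
  finally show ?thesis .
qed

lemma affine_image_eq_if_span_cols_eq:
  fixes H W :: "'a :: field mat"
  assumes H: "H \<in> carrier_mat m n1" and W: "W \<in> carrier_mat m n2"
    and span: "LinearCombinations.module.span class_ring (module_vec TYPE('a) m) (set (cols H)) =
               LinearCombinations.module.span class_ring (module_vec TYPE('a) m) (set (cols W))"
  shows "{H *\<^sub>v l + p | l. l \<in> carrier_vec n1} = {W *\<^sub>v c + p | c. c \<in> carrier_vec n2}"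
proof -
  have "{H *\<^sub>v l + p | l. l \<in> carrier_vec n1} = (\<lambda>v. v + p) ` ((*\<^sub>v) H ` carrier_vec n1)" by auto
  also have "\<dots> = (\<lambda>v. v + p) ` ((*\<^sub>v) W ` carrier_vec n2)"
    unfolding mult_mat_vec_image_eq_if_span_cols_eq[OF H W span] ..
  also have "\<dots> = {W *\<^sub>v c + p | c. c \<in> carrier_vec n2}" by auto
  finally show ?thesis .
qed

lemma affine_images_Int:
  fixes H1 H2 :: "'a :: field mat"
  assumes H1: "H1 \<in> carrier_mat m n1" and H2: "H2 \<in> carrier_mat m n2"
    and p1: "p1 \<in> carrier_vec m" and p2: "p2 \<in> carrier_vec m"
  shows "{H1 *\<^sub>v l1 + p1 | l1. l1 \<in> carrier_vec n1} \<inter> {H2 *\<^sub>v l2 + p2 | l2. l2 \<in> carrier_vec n2} =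
         {H1 *\<^sub>v l1 + p1 | l1 l2. l1 \<in> carrier_vec n1 \<and> l2 \<in> carrier_vec n2 \<and>
            H1 *\<^sub>v l1 + H2 *\<^sub>v l2 = p2 - p1}"
proof -
  have meet_iff: "H1 *\<^sub>v l1 + p1 = H2 *\<^sub>v l2 + p2 \<longleftrightarrow>
                  H1 *\<^sub>v l1 + H2 *\<^sub>v ((-1) \<cdot>\<^sub>v l2) = p2 - p1"
    if l: "l1 \<in> carrier_vec n1" "l2 \<in> carrier_vec n2" for l1 l2
  proof -
    have "(H2 *\<^sub>v ((-1) \<cdot>\<^sub>v l2)) $ i = - (H2 *\<^sub>v l2) $ i" if "i < m" for i
      using mult_mat_vec[OF H2 l(2), of "-1"] that H2 by simp
    moreover have "a + q1 = b + q2 \<longleftrightarrow> a - b = q2 - q1" for a b q1 q2 :: 'a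
      by (auto simp: algebra_simps)
    ultimately show ?thesis using H1 H2 p1 p2 by (simp add: vec_eq_iff)
  qed
  have neg_neg: "(-1) \<cdot>\<^sub>v ((-1) \<cdot>\<^sub>v l) = (l :: 'a vec)" for l by (intro eq_vecI) auto
  show ?thesis
  proof (intro equalityI subsetI)
    fix z assume "z \<in> {H1 *\<^sub>v l1 + p1 | l1. l1 \<in> carrier_vec n1} \<inter> {H2 *\<^sub>v l2 + p2 | l2. l2 \<in> carrier_vec n2}"
    then obtain l1 l2 where l: "l1 \<in> carrier_vec n1" "l2 \<in> carrier_vec n2"
      and z: "z = H1 *\<^sub>v l1 + p1" and meet: "H1 *\<^sub>v l1 + p1 = H2 *\<^sub>v l2 + p2" by blast
    have "H1 *\<^sub>v l1 + H2 *\<^sub>v ((-1) \<cdot>\<^sub>v l2) = p2 - p1" using meet_iff[OF l] meet by blast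
    moreover have "(-1) \<cdot>\<^sub>v l2 \<in> carrier_vec n2" using l(2) by simp
    ultimately show "z \<in> {H1 *\<^sub>v l1 + p1 | l1 l2. l1 \<in> carrier_vec n1 \<and> l2 \<in> carrier_vec n2 \<and>
                   H1 *\<^sub>v l1 + H2 *\<^sub>v l2 = p2 - p1}"
      using l(1) z by blast
  next
    fix z assume "z \<in> {H1 *\<^sub>v l1 + p1 | l1 l2. l1 \<in> carrier_vec n1 \<and> l2 \<in> carrier_vec n2 \<and>
                   H1 *\<^sub>v l1 + H2 *\<^sub>v l2 = p2 - p1}"
    then obtain l1 l2 where l: "l1 \<in> carrier_vec n1" "l2 \<in> carrier_vec n2"
      and z: "z = H1 *\<^sub>v l1 + p1" and eq: "H1 *\<^sub>v l1 + H2 *\<^sub>v l2 = p2 - p1" by blast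
    have l2': "(-1) \<cdot>\<^sub>v l2 \<in> carrier_vec n2" using l(2) by simp
    have "z = H2 *\<^sub>v ((-1) \<cdot>\<^sub>v l2) + p2"
      using meet_iff[OF l(1) l2'] eq z unfolding neg_neg by blast
    then show "z \<in> {H1 *\<^sub>v l1 + p1 | l1. l1 \<in> carrier_vec n1} \<inter> {H2 *\<^sub>v l2 + p2 | l2. l2 \<in> carrier_vec n2}"
      using l(1) l2' z by blast
  qed
qed
lemma behavior_carrier:
  "behavior nx nu ny T A B C D x0 \<subseteq> carrier_vec ((nu + ny) * T)"
  unfolding behavior_def by (auto simp: distrib_right)

lemma behavior_lincomb:
  assumes dims: "\<forall>t<T. A t \<in> carrier_mat nx nx \<and> B t \<in> carrier_mat nx nu \<and>
            C t \<in> carrier_mat ny nx \<and> D t \<in> carrier_mat ny nu"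
    and a: "a \<in> behavior nx nu ny T A B C D xa"
    and b: "b \<in> behavior nx nu ny T A B C D xb"
  shows "\<alpha> \<cdot>\<^sub>v a + \<beta> \<cdot>\<^sub>v b \<in> behavior nx nu ny T A B C D (\<alpha> \<cdot>\<^sub>v xa + \<beta> \<cdot>\<^sub>v xb)"
proof -
  obtain ua ya xsa where ha: "a = ua @\<^sub>v ya" "ua \<in> carrier_vec (nu * T)" "ya \<in> carrier_vec (ny * T)"
    "xsa 0 = xa" "\<forall>t<T. xsa t \<in> carrier_vec nx \<and>
                  xsa (Suc t) = A t *\<^sub>v xsa t + B t *\<^sub>v blk nu ua t \<and>
                  blk ny ya t = C t *\<^sub>v xsa t + D t *\<^sub>v blk nu ua t"
    using a unfolding behavior_def by blast
  obtain ub yb xsb where hb: "b = ub @\<^sub>v yb" "ub \<in> carrier_vec (nu * T)" "yb \<in> carrier_vec (ny * T)"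
    "xsb 0 = xb" "\<forall>t<T. xsb t \<in> carrier_vec nx \<and>
                  xsb (Suc t) = A t *\<^sub>v xsb t + B t *\<^sub>v blk nu ub t \<and>
                  blk ny yb t = C t *\<^sub>v xsb t + D t *\<^sub>v blk nu ub t"
    using b unfolding behavior_def by blast
  define u where "u = \<alpha> \<cdot>\<^sub>v ua + \<beta> \<cdot>\<^sub>v ub"
  define y where "y = \<alpha> \<cdot>\<^sub>v ya + \<beta> \<cdot>\<^sub>v yb"
  define x where "x = (\<lambda>t. \<alpha> \<cdot>\<^sub>v xsa t + \<beta> \<cdot>\<^sub>v xsb t)"
  have lin: "M *\<^sub>v (\<alpha> \<cdot>\<^sub>v p + \<beta> \<cdot>\<^sub>v q) = \<alpha> \<cdot>\<^sub>v (M *\<^sub>v p) + \<beta> \<cdot>\<^sub>v (M *\<^sub>v q)"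
    if "M \<in> carrier_mat r c" "p \<in> carrier_vec c" "q \<in> carrier_vec c" for M :: "real mat" and r c p q
    using that by (simp add: mult_add_distrib_mat_vec mult_mat_vec)
  have rearrange: "\<alpha> \<cdot>\<^sub>v (p1 + q1) + \<beta> \<cdot>\<^sub>v (p2 + q2) = (\<alpha> \<cdot>\<^sub>v p1 + \<beta> \<cdot>\<^sub>v p2) + (\<alpha> \<cdot>\<^sub>v q1 + \<beta> \<cdot>\<^sub>v q2)"
    if "p1 \<in> carrier_vec r" "p2 \<in> carrier_vec r" "q1 \<in> carrier_vec r" "q2 \<in> carrier_vec r"
    for p1 p2 q1 q2 :: "real vec" and r
    using that by (intro eq_vecI) (auto simp: algebra_simps)
  have "x t \<in> carrier_vec nx \<and> x (Suc t) = A t *\<^sub>v x t + B t *\<^sub>v blk nu u t \<and>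
        blk ny y t = C t *\<^sub>v x t + D t *\<^sub>v blk nu u t" if t: "t < T" for t
  proof (intro conjI)
    have xs: "xsa t \<in> carrier_vec nx" "xsb t \<in> carrier_vec nx" using ha(5) hb(5) t by auto
    have us: "blk nu ua t \<in> carrier_vec nu" "blk nu ub t \<in> carrier_vec nu" unfolding blk_def by auto
    have m: "A t \<in> carrier_mat nx nx" "B t \<in> carrier_mat nx nu"
      "C t \<in> carrier_mat ny nx" "D t \<in> carrier_mat ny nu"
      using dims t by auto
    have u_blk: "blk nu u t = \<alpha> \<cdot>\<^sub>v blk nu ua t + \<beta> \<cdot>\<^sub>v blk nu ub t"
      unfolding u_def using blk_lincomb ha(2) hb(2) t by blast
    have y_blk: "blk ny y t = \<alpha> \<cdot>\<^sub>v blk ny ya t + \<beta> \<cdot>\<^sub>v blk ny yb t"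
      unfolding y_def using blk_lincomb ha(3) hb(3) t by blast
    show "x t \<in> carrier_vec nx" unfolding x_def using xs by auto
    show "x (Suc t) = A t *\<^sub>v x t + B t *\<^sub>v blk nu u t"
      unfolding x_def u_blk using ha(5) hb(5) t xs us m
      by (simp add: lin[OF m(1)] lin[OF m(2)] rearrange[of _ nx])
    show "blk ny y t = C t *\<^sub>v x t + D t *\<^sub>v blk nu u t"
      unfolding x_def u_blk y_blk using ha(5) hb(5) t xs us m
      by (simp add: lin[OF m(3)] lin[OF m(4)] rearrange[of _ ny])
  qed
  moreover have "\<alpha> \<cdot>\<^sub>v a + \<beta> \<cdot>\<^sub>v b = u @\<^sub>v y"
    unfolding u_def y_def ha hb using ha(2,3) hb(2,3) by (intro eq_vecI) auto
  moreover have "x 0 = \<alpha> \<cdot>\<^sub>v xa + \<beta> \<cdot>\<^sub>v xb" unfolding x_def ha(4) hb(4) ..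
  moreover have "u \<in> carrier_vec (nu * T)" "y \<in> carrier_vec (ny * T)"
    unfolding u_def y_def using ha hb by auto
  ultimately show ?thesis unfolding behavior_def by blast
qed

lemma behavior_diff:
  assumes "well_dim_sys nx nu ny T A B C D x0"
    and "a \<in> behavior nx nu ny T A B C D x0" "b \<in> behavior nx nu ny T A B C D x0"
  shows "a - b \<in> behavior nx nu ny T A B C D (0\<^sub>v nx)"
proof -
  have "x0 \<in> carrier_vec nx" using assms(1) unfolding well_dim_sys_def by simp
  then have "1 \<cdot>\<^sub>v x0 + (-1) \<cdot>\<^sub>v x0 = 0\<^sub>v nx" by (intro eq_vecI) auto
  moreover have "1 \<cdot>\<^sub>v a + (-1) \<cdot>\<^sub>v b = a - b"
    using assms(2,3) behavior_carrier by (intro eq_vecI) auto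
  ultimately show ?thesis
    using behavior_lincomb[of T A nx B nu C ny D a x0 b x0 1 "-1"] assms
    unfolding well_dim_sys_def by simp
qed

lemma behavior_add:
  assumes "well_dim_sys nx nu ny T A B C D x0"
    and "a \<in> behavior nx nu ny T A B C D x0" "b \<in> behavior nx nu ny T A B C D (0\<^sub>v nx)"
  shows "a + b \<in> behavior nx nu ny T A B C D x0"
proof -
  have "x0 \<in> carrier_vec nx" using assms(1) unfolding well_dim_sys_def by simp
  then have "1 \<cdot>\<^sub>v x0 + 1 \<cdot>\<^sub>v 0\<^sub>v nx = x0" by (intro eq_vecI) auto
  moreover have "1 \<cdot>\<^sub>v a + 1 \<cdot>\<^sub>v b = a + b"
    using assms(2,3) behavior_carrier by (intro eq_vecI) auto
  ultimately show ?thesis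
    using behavior_lincomb[of T A nx B nu C ny D a x0 b "0\<^sub>v nx" 1 1] assms
    unfolding well_dim_sys_def by simp
qed

lemma zero_in_behavior_zero:
  assumes dims: "\<forall>t<T. A t \<in> carrier_mat nx nx \<and> B t \<in> carrier_mat nx nu \<and>
            C t \<in> carrier_mat ny nx \<and> D t \<in> carrier_mat ny nu"
  shows "0\<^sub>v ((nu + ny) * T) \<in> behavior nx nu ny T A B C D (0\<^sub>v nx)"
proof -
  have blk_zero: "blk n (0\<^sub>v (n * T)) t = (0\<^sub>v n :: real vec)" if "t < T" for n t
    using block_index_less[OF that] unfolding blk_def by (intro eq_vecI) auto
  have "\<exists>x. x 0 = 0\<^sub>v nx \<and> (\<forall>t<T. x t \<in> carrier_vec nx \<and>
      x (Suc t) = A t *\<^sub>v x t + B t *\<^sub>v blk nu (0\<^sub>v (nu * T)) t \<and>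
      blk ny (0\<^sub>v (ny * T)) t = C t *\<^sub>v x t + D t *\<^sub>v blk nu (0\<^sub>v (nu * T)) t)"
  proof (intro exI[of _ "\<lambda>_. 0\<^sub>v nx"] conjI allI impI)
    fix t assume "t < T"
    then have "A t \<in> carrier_mat nx nx" "B t \<in> carrier_mat nx nu"
      "C t \<in> carrier_mat ny nx" "D t \<in> carrier_mat ny nu"
      and "blk nu (0\<^sub>v (nu * T)) t = 0\<^sub>v nu" "blk ny (0\<^sub>v (ny * T)) t = 0\<^sub>v ny"
      using dims blk_zero by auto
    then show "0\<^sub>v nx = A t *\<^sub>v 0\<^sub>v nx + B t *\<^sub>v blk nu (0\<^sub>v (nu * T)) t"
      "blk ny (0\<^sub>v (ny * T)) t = C t *\<^sub>v 0\<^sub>v nx + D t *\<^sub>v blk nu (0\<^sub>v (nu * T)) t"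
      by (auto simp: scalar_prod_def)
  qed simp_all
  moreover have "0\<^sub>v ((nu + ny) * T) = 0\<^sub>v (nu * T) @\<^sub>v (0\<^sub>v (ny * T) :: real vec)"
    by (intro eq_vecI) (auto simp: distrib_right)
  ultimately show ?thesis unfolding behavior_def using zero_carrier_vec by blast
qed

lemma behavior_zero_submodule:
  assumes dims: "\<forall>t<T. A t \<in> carrier_mat nx nx \<and> B t \<in> carrier_mat nx nu \<and>
            C t \<in> carrier_mat ny nx \<and> D t \<in> carrier_mat ny nu"
  shows "submodule class_ring (behavior nx nu ny T A B C D (0\<^sub>v nx))
           (module_vec TYPE(real) ((nu + ny) * T))"
proof -
  let ?B_hom = "behavior nx nu ny T A B C D (0\<^sub>v nx)"
  let ?V = "module_vec TYPE(real) ((nu + ny) * T)"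
  have lincomb: "\<alpha> \<cdot>\<^sub>v v + \<beta> \<cdot>\<^sub>v w \<in> ?B_hom" if "v \<in> ?B_hom" "w \<in> ?B_hom" for \<alpha> \<beta> v w
  proof -
    have "\<alpha> \<cdot>\<^sub>v 0\<^sub>v nx + \<beta> \<cdot>\<^sub>v 0\<^sub>v nx = (0\<^sub>v nx :: real vec)" by (intro eq_vecI) auto
    then show ?thesis using behavior_lincomb[OF dims that] by metis
  qed
  have carrier: "v \<in> carrier_vec ((nu + ny) * T)" if "v \<in> ?B_hom" for v
    using that behavior_carrier by blast
  show ?thesis
  proof (unfold submodule_def, intro conjI allI impI)
    show "module class_ring ?V" by (rule vec_module)
    show "?B_hom \<subseteq> carrier ?V" using carrier by (auto simp: module_vec_simps)
    show "\<zero>\<^bsub>?V\<^esub> \<in> ?B_hom" using zero_in_behavior_zero[OF dims] by (simp add: module_vec_simps)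
  next
    fix v w assume "v \<in> ?B_hom" "w \<in> ?B_hom"
    then show "v \<oplus>\<^bsub>?V\<^esub> w \<in> ?B_hom"
      using lincomb[of v w 1 1] carrier by (auto simp: module_vec_simps)
  next
    fix c :: real and v assume v: "v \<in> ?B_hom"
    then have "c \<cdot>\<^sub>v v + 0 \<cdot>\<^sub>v v = c \<cdot>\<^sub>v v" using carrier by (intro eq_vecI) auto
    then show "c \<odot>\<^bsub>?V\<^esub> v \<in> ?B_hom"
      using lincomb[OF v v, of c 0] by (simp add: module_vec_simps)
  qed
qed

lemma behavior_eq_if_vec_first_eq:
  assumes a: "a \<in> behavior nx nu ny T A B C D x0" and b: "b \<in> behavior nx nu ny T A B C D x0"
    and inputs: "vec_first a (nu * T) = vec_first b (nu * T)"
  shows "a = b"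
proof -
  obtain u y x where ha: "a = u @\<^sub>v y" "u \<in> carrier_vec (nu * T)" "y \<in> carrier_vec (ny * T)"
    "x 0 = x0" "\<forall>t<T. x (Suc t) = A t *\<^sub>v x t + B t *\<^sub>v blk nu u t \<and>
                      blk ny y t = C t *\<^sub>v x t + D t *\<^sub>v blk nu u t"
    using a unfolding behavior_def by blast
  obtain u' y' x' where hb: "b = u' @\<^sub>v y'" "u' \<in> carrier_vec (nu * T)" "y' \<in> carrier_vec (ny * T)"
    "x' 0 = x0" "\<forall>t<T. x' (Suc t) = A t *\<^sub>v x' t + B t *\<^sub>v blk nu u' t \<and>
                      blk ny y' t = C t *\<^sub>v x' t + D t *\<^sub>v blk nu u' t"
    using b unfolding behavior_def by blast
  have "u = u'" using inputs ha(1,2) hb(1,2) by (simp add: vec_first_append)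
  moreover from this have "x t = x' t" if "t \<le> T" for t
    using that by (induction t) (use ha hb in auto)
  ultimately have "y = y'"
    using ha hb by (intro eq_vec_if_blk_eq[of y ny T y']) auto
  with \<open>u = u'\<close> show ?thesis using ha(1) hb(1) by simp
qed

lemma vec_first_diff_mat_mult_vec:
  assumes u: "\<forall>k\<le>N. u k \<in> carrier_vec N" and u0: "u 0 = 0\<^sub>v N"
    and c: "c \<in> carrier_vec N"
  shows "vec_first (diff_mat (N + p) N (\<lambda>k. u k @\<^sub>v y k) *\<^sub>v c) N =
         mat_of_cols N (map u [1..<N + 1]) *\<^sub>v c"
proof (rule eq_vecI)
  let ?W = "diff_mat (N + p) N (\<lambda>k. u k @\<^sub>v y k)" and ?M = "mat_of_cols N (map u [1..<N + 1])"
  fix i assume "i < dim_vec (?M *\<^sub>v c)"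
  then have i: "i < N" by simp
  have "row ?W i = row ?M i"
  proof (rule eq_vecI)
    fix j assume "j < dim_vec (row ?M i)"
    then have j: "j < N" by (simp del: upt_Suc)
    have "u (Suc j) \<in> carrier_vec N" "u 0 \<in> carrier_vec N" using u j by auto
    then show "row ?W i $ j = row ?M i $ j"
      using i j u0 unfolding diff_mat_def by (simp add: mat_of_cols_index del: upt_Suc)
  qed (simp add: diff_mat_def)
  then show "vec_first (?W *\<^sub>v c) N $ i = (?M *\<^sub>v c) $ i"
    using i unfolding vec_first_def by (simp add: diff_mat_def)
qed simp

lemma behavior_eq_affine_image:
  fixes nu T :: nat and u y :: "nat \<Rightarrow> real vec"
  defines "N \<equiv> nu * T" and "w \<equiv> \<lambda>k. u k @\<^sub>v y k"
  assumes sys: "well_dim_sys nx nu ny T A B C D x0"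
    and u_dim: "\<forall>k\<le>N. u k \<in> carrier_vec N"
    and y_dim: "\<forall>k\<le>N. y k \<in> carrier_vec (ny * T)"
    and out: "\<forall>k\<le>N. w k \<in> behavior nx nu ny T A B C D x0"
    and u0: "u 0 = 0\<^sub>v N"
    and rank: "vec_space.rank N (mat_of_cols N (map u [1..<N + 1])) = N"
  shows "behavior nx nu ny T A B C D x0 =
           {diff_mat ((nu + ny) * T) N w *\<^sub>v c + w 0 | c. c \<in> carrier_vec N}"
proof -
  let ?B = "behavior nx nu ny T A B C D x0" and ?B_hom = "behavior nx nu ny T A B C D (0\<^sub>v nx)"
  define W where "W = diff_mat ((nu + ny) * T) N w"
  define M where "M = mat_of_cols N (map u [1..<N + 1])"
  have m: "(nu + ny) * T = N + ny * T" unfolding N_def by (simp add: distrib_right)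
  have dims: "\<forall>t<T. A t \<in> carrier_mat nx nx \<and> B t \<in> carrier_mat nx nu \<and>
                 C t \<in> carrier_mat ny nx \<and> D t \<in> carrier_mat ny nu"
    using sys unfolding well_dim_sys_def by blast
  have W: "W \<in> carrier_mat ((nu + ny) * T) N" unfolding W_def diff_mat_def by auto
  have M: "M \<in> carrier_mat N N" unfolding M_def by auto
  have w_carrier: "w k \<in> carrier_vec ((nu + ny) * T)" if "k \<le> N" for k
    using out that behavior_carrier by blast
  have "set (cols W) = (\<lambda>k. w k - w 0) ` {1..N}"
    unfolding W_def diff_mat_def using w_carrier by (subst cols_mat_of_cols) (auto simp del: upt_Suc)
  also have "\<dots> \<subseteq> ?B_hom" using behavior_diff[OF sys] out by auto
  finally have W_in: "W *\<^sub>v c \<in> ?B_hom" if "c \<in> carrier_vec N" for c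
    using mult_mat_vec_in_submodule[OF W that behavior_zero_submodule[OF dims]] by blast
  show ?thesis unfolding W_def[symmetric]
  proof (intro equalityI subsetI)
    fix a assume a: "a \<in> ?B"
    have d: "a - w 0 \<in> ?B_hom" using behavior_diff[OF sys a] out by simp
    obtain c where c: "c \<in> carrier_vec N" "M *\<^sub>v c = vec_first (a - w 0) N"
      using full_rank_mult_vec_surj[OF M rank[folded M_def] vec_first_carrier] by blast
    have "vec_first (W *\<^sub>v c) N = vec_first (a - w 0) N"
      using vec_first_diff_mat_mult_vec[OF u_dim u0 c(1), of "ny * T" y] c(2)
      unfolding W_def M_def w_def m by simp
    then have "W *\<^sub>v c = a - w 0"
      using behavior_eq_if_vec_first_eq[OF W_in[OF c(1)] d] unfolding N_def by blast
    moreover have "a \<in> carrier_vec ((nu + ny) * T)" using a behavior_carrier by blast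
    ultimately have "a = W *\<^sub>v c + w 0" using w_carrier[of 0] by (intro eq_vecI) auto
    then show "a \<in> {W *\<^sub>v c + w 0 | c. c \<in> carrier_vec N}" using c(1) by blast
  next
    fix a assume "a \<in> {W *\<^sub>v c + w 0 | c. c \<in> carrier_vec N}"
    then obtain c where c: "c \<in> carrier_vec N" "a = W *\<^sub>v c + w 0" by blast
    have "w 0 + W *\<^sub>v c \<in> ?B" using behavior_add[OF sys _ W_in[OF c(1)]] out by simp
    then show "a \<in> ?B"
      using c W w_carrier[of 0] by (simp add: comm_add_vec[of _ "(nu + ny) * T"])
  qed
qed

theorem lemma2:
  fixes nu ny T nx1 nx2 :: nat
    and A1 B1 C1 D1 A2 B2 C2 D2 :: "nat \<Rightarrow> real mat"
    and x10 x20 :: "real vec"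
    and u1 y1 u2 y2 :: "nat \<Rightarrow> real vec"
    and H1 H2 :: "real mat"
  defines "w1 \<equiv> \<lambda>k. u1 k @\<^sub>v y1 k"
    and "w2 \<equiv> \<lambda>k. u2 k @\<^sub>v y2 k"
    and "\<BB>1 \<equiv> behavior nx1 nu ny T A1 B1 C1 D1 x10"
    and "\<BB>2 \<equiv> behavior nx2 nu ny T A2 B2 C2 D2 x20"
  assumes sys1: "well_dim_sys nx1 nu ny T A1 B1 C1 D1 x10"
    and sys2: "well_dim_sys nx2 nu ny T A2 B2 C2 D2 x20"
    and u1_dim: "\<forall>k\<le>nu * T. u1 k \<in> carrier_vec (nu * T)"
    and u2_dim: "\<forall>k\<le>nu * T. u2 k \<in> carrier_vec (nu * T)"
    and y1_dim: "\<forall>k\<le>nu * T. y1 k \<in> carrier_vec (ny * T)"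
    and y2_dim: "\<forall>k\<le>nu * T. y2 k \<in> carrier_vec (ny * T)"
    and y1_out: "\<forall>k\<le>nu * T. w1 k \<in> \<BB>1"
    and y2_out: "\<forall>k\<le>nu * T. w2 k \<in> \<BB>2"
    and u10: "u1 0 = 0\<^sub>v (nu * T)"
    and u20: "u2 0 = 0\<^sub>v (nu * T)"
    and rank1: "vec_space.rank (nu * T) (mat_of_cols (nu * T) (map u1 [1..<nu * T + 1])) = nu * T"
    and rank2: "vec_space.rank (nu * T) (mat_of_cols (nu * T) (map u2 [1..<nu * T + 1])) = nu * T"
    and H1_dim: "H1 \<in> carrier_mat ((nu + ny) * T) (nu * T)"
    and H2_dim: "H2 \<in> carrier_mat ((nu + ny) * T) (nu * T)"
    and H1_onb: "onb_of_span ((nu + ny) * T) H1 (diff_mat ((nu + ny) * T) (nu * T) w1)"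
    and H2_onb: "onb_of_span ((nu + ny) * T) H2 (diff_mat ((nu + ny) * T) (nu * T) w2)"
  shows "(\<BB>1 \<inter> \<BB>2 \<noteq> {} \<longleftrightarrow>
           (\<exists>l1 \<in> carrier_vec (nu * T). \<exists>l2 \<in> carrier_vec (nu * T).
              H1 *\<^sub>v l1 + H2 *\<^sub>v l2 = w2 0 - w1 0))
       \<and> \<BB>1 \<inter> \<BB>2 =
           {H1 *\<^sub>v l1 + w1 0 | l1 l2. l1 \<in> carrier_vec (nu * T) \<and> l2 \<in> carrier_vec (nu * T) \<and>
              H1 *\<^sub>v l1 + H2 *\<^sub>v l2 = w2 0 - w1 0}"
proof -
  let ?m = "(nu + ny) * T" and ?N = "nu * T"
  have W1: "diff_mat ?m ?N w1 \<in> carrier_mat ?m ?N" and W2: "diff_mat ?m ?N w2 \<in> carrier_mat ?m ?N"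
    unfolding diff_mat_def by auto
  have "\<BB>1 = {diff_mat ?m ?N w1 *\<^sub>v c + w1 0 | c. c \<in> carrier_vec ?N}"
    unfolding \<BB>1_def w1_def
    by (rule behavior_eq_affine_image[OF sys1 u1_dim y1_dim _ u10 rank1])
      (use y1_out in \<open>simp add: \<BB>1_def w1_def\<close>)
  also have "\<dots> = {H1 *\<^sub>v l + w1 0 | l. l \<in> carrier_vec ?N}"
    by (rule affine_image_eq_if_span_cols_eq
          [OF H1_dim W1 H1_onb[unfolded onb_of_span_def, THEN conjunct2], symmetric])
  finally have B1: "\<BB>1 = {H1 *\<^sub>v l + w1 0 | l. l \<in> carrier_vec ?N}" .
  have "\<BB>2 = {diff_mat ?m ?N w2 *\<^sub>v c + w2 0 | c. c \<in> carrier_vec ?N}"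
    unfolding \<BB>2_def w2_def
    by (rule behavior_eq_affine_image[OF sys2 u2_dim y2_dim _ u20 rank2])
      (use y2_out in \<open>simp add: \<BB>2_def w2_def\<close>)
  also have "\<dots> = {H2 *\<^sub>v l + w2 0 | l. l \<in> carrier_vec ?N}"
    by (rule affine_image_eq_if_span_cols_eq
          [OF H2_dim W2 H2_onb[unfolded onb_of_span_def, THEN conjunct2], symmetric])
  finally have B2: "\<BB>2 = {H2 *\<^sub>v l + w2 0 | l. l \<in> carrier_vec ?N}" .
  have "w1 0 \<in> carrier_vec ?m" "w2 0 \<in> carrier_vec ?m"
    using y1_out y2_out behavior_carrier unfolding \<BB>1_def \<BB>2_def by blast+
  then have "\<BB>1 \<inter> \<BB>2 = {H1 *\<^sub>v l1 + w1 0 | l1 l2. l1 \<in> carrier_vec ?N \<and> l2 \<in> carrier_vec ?N \<and>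
              H1 *\<^sub>v l1 + H2 *\<^sub>v l2 = w2 0 - w1 0}"
    unfolding B1 B2 by (rule affine_images_Int[OF H1_dim H2_dim])
  then show ?thesis by blast
qed

end
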